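(* $\mathrm{NP}/\mathrm{rpoly}=\mathrm{ALL}$, i.e., every promise problem $A=(A_{yes},A_{no})$ over $\{0,1\}^*$ belongs to $\mathrm{NP}/\mathrm{rpoly}$.
   Context: NP/rpoly: $A=(A_{yes},A_{no})\in\mathrm{NP}/\mathrm{rpoly}$ iff there exist a classical probabilistic polynomial-time algorithm $M$ and a family $\{q_s\}_{s\in\mathbb{N}}$ of probability distributions $q_s$ on $\{0,1\}^{\mathrm{poly}(s)}$ (arbitrary, not required to be computable) such that, when $M$ is run on input $(x,b)$ with $b$ sampled from $q_{|x|}$, $\Pr(M\text{ accepts})>0$ if $x\in A_{yes}$ and $\Pr(M\text{ accepts})=0$ if $x\in A_{no}$. ALL denotes the class of all (promise) problems. *)

theory Defs
  imports "HOL-Probability.Probability"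
begin

datatype sym = Blank | Zero | One
datatype move = MoveL | Stay | MoveR

type_synonym tape = "(int \<Rightarrow> sym) \<times> int"

record tm =
  nstates :: nat
  start :: nat
  acc :: nat
  rej :: nat
  delta :: "nat \<Rightarrow> sym \<times> sym \<times> sym \<Rightarrow> nat \<times> (sym \<times> sym \<times> sym) \<times> (move \<times> move \<times> move)"

definition wf_tm :: "tm \<Rightarrow> bool" where
  "wf_tm M \<longleftrightarrow> start M < nstates M \<and> acc M < nstates M \<and> rej M < nstates M
     \<and> acc M \<noteq> rej M \<and> (\<forall>q < nstates M. \<forall>s. fst (delta M q s) < nstates M)"

fun mv :: "move \<Rightarrow> int \<Rightarrow> int" where
  "mv MoveL i = i - 1"
| "mv Stay i = i"
| "mv MoveR i = i + 1"

definition tape_read :: "tape \<Rightarrow> sym" where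
  "tape_read t = fst t (snd t)"

definition tape_step :: "tape \<Rightarrow> sym \<Rightarrow> move \<Rightarrow> tape" where
  "tape_step t a m = ((fst t)(snd t := a), mv m (snd t))"

type_synonym config = "nat \<times> tape \<times> tape \<times> tape"

definition step :: "tm \<Rightarrow> config \<Rightarrow> config" where
  "step M c = (case c of (q, t1, t2, t3) \<Rightarrow>
     if q = acc M \<or> q = rej M then c
     else (case delta M q (tape_read t1, tape_read t2, tape_read t3) of
             (q', (a1, a2, a3), (m1, m2, m3)) \<Rightarrow>
               (q', tape_step t1 a1 m1, tape_step t2 a2 m2, tape_step t3 a3 m3)))"

definition bit_sym :: "bool \<Rightarrow> sym" where
  "bit_sym b = (if b then One else Zero)"

definition init_tape :: "bool list \<Rightarrow> tape" where
  "init_tape w = ((\<lambda>i. if 0 \<le> i \<and> nat i < length w then bit_sym (w ! nat i) else Blank), 0)"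

text \<open>Input x on tape 1, advice b on tape 2, random coins r on tape 3.\<close>
definition init_config :: "tm \<Rightarrow> bool list \<Rightarrow> bool list \<Rightarrow> bool list \<Rightarrow> config" where
  "init_config M x b r = (start M, init_tape x, init_tape b, init_tape r)"

definition run :: "tm \<Rightarrow> nat \<Rightarrow> config \<Rightarrow> config" where
  "run M t c = (step M ^^ t) c"

definition halts_within :: "tm \<Rightarrow> nat \<Rightarrow> bool list \<Rightarrow> bool list \<Rightarrow> bool list \<Rightarrow> bool" where
  "halts_within M T x b r \<longleftrightarrow>
     (\<exists>t\<le>T. fst (run M t (init_config M x b r)) \<in> {acc M, rej M})"

definition accepts :: "tm \<Rightarrow> bool list \<Rightarrow> bool list \<Rightarrow> bool list \<Rightarrow> bool" where
  "accepts M x b r \<longleftrightarrow> (\<exists>t. fst (run M t (init_config M x b r)) = acc M)"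

definition poly_bounded :: "(nat \<Rightarrow> nat) \<Rightarrow> bool" where
  "poly_bounded f \<longleftrightarrow> (\<exists>c k. \<forall>n. f n \<le> c * n ^ k + c)"

definition ppt :: "tm \<Rightarrow> (nat \<Rightarrow> nat) \<Rightarrow> bool" where
  "ppt M rho \<longleftrightarrow> wf_tm M \<and> poly_bounded rho \<and>
     (\<exists>T. poly_bounded T \<and>
        (\<forall>x b r. length r = rho (length x) \<longrightarrow>
           halts_within M (T (length x + length b + length r)) x b r))"

definition accept_prob :: "tm \<Rightarrow> (nat \<Rightarrow> nat) \<Rightarrow> bool list pmf \<Rightarrow> bool list \<Rightarrow> real" where
  "accept_prob M rho q x =
     measure_pmf.prob
       (bind_pmf q (\<lambda>b. map_pmf (\<lambda>r. accepts M x b r)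
                           (pmf_of_set {r. length r = rho (length x)})))
       {True}"

definition promise_problem :: "bool list set \<times> bool list set \<Rightarrow> bool" where
  "promise_problem A \<longleftrightarrow> fst A \<inter> snd A = {}"

definition NP_rpoly :: "(bool list set \<times> bool list set) set" where
  "NP_rpoly = {A. \<exists>M rho (l :: nat \<Rightarrow> nat) (q :: nat \<Rightarrow> bool list pmf).
      ppt M rho \<and> poly_bounded l \<and>
      (\<forall>s. set_pmf (q s) \<subseteq> {b. length b = l s}) \<and>
      (\<forall>x \<in> fst A. accept_prob M rho (q (length x)) x > 0) \<and>
      (\<forall>x \<in> snd A. accept_prob M rho (q (length x)) x = 0)}"

definition ALL_problems :: "(bool list set \<times> bool list set) set" where
  "ALL_problems = {A. promise_problem A}"

end

theory Submission
  imports Defs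
begin

text \<open>Advice drawn from an arbitrary distribution can carry the whole answer. For inputs of
length n let the advice be uniform over the strings y @ [True] with y a yes-instance of length n
(or the all-False string if there is none), and let the machine ignore its coins and accept
exactly when the advice starts with x @ [True]. Then x is accepted with positive probability iff
it is a yes-instance, so in particular never when it is a no-instance. Conversely, no input can
have acceptance probability both positive and zero, so problems in NP/rpoly are promise
problems.\<close>

lemma take_Suc_eq_take_Suc_iff:
  assumes "k < length x"
  shows "take (Suc k) b = take (Suc k) x \<longleftrightarrow> take k b = take k x \<and> k < length b \<and> b ! k = x ! k"
proof (cases "k < length b")
  case True
  with assms show ?thesis by (simp add: take_Suc_conv_app_nth)
next
  case False
  then have "length (take (Suc k) b) \<noteq> length (take (Suc k) x)"
    using assms by simp
  with False show ?thesis by metis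
qed

lemma append_Cons_prefix_iff:
  "(\<exists>c. b = x @ a # c) \<longleftrightarrow> take (length x) b = x \<and> length x < length b \<and> b ! length x = a"
proof
  assume "take (length x) b = x \<and> length x < length b \<and> b ! length x = a"
  then have "b = x @ a # drop (Suc (length x)) b"
    by (metis append_take_drop_id Cons_nth_drop_Suc)
  then show "\<exists>c. b = x @ a # c" ..
qed auto

lemma bit_sym_neq_Blank: "bit_sym v \<noteq> Blank"
  by (simp add: bit_sym_def)

lemma bit_sym_eq_iff: "bit_sym v = bit_sym w \<longleftrightarrow> v = w"
  by (simp add: bit_sym_def)

lemma run_Suc: "run M (Suc t) c = step M (run M t c)"
  by (simp add: run_def)

lemma run_add: "run M (s + t) c = run M s (run M t c)"
  by (simp add: run_def funpow_add)

lemma step_halted: "fst c \<in> {acc M, rej M} \<Longrightarrow> step M c = c"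
  by (cases c) (auto simp: step_def)

lemma run_halted: "fst c \<in> {acc M, rej M} \<Longrightarrow> run M t c = c"
  by (induction t) (simp_all add: run_def step_halted)

lemma step_writing_back:
  assumes "q \<noteq> acc M" "q \<noteq> rej M"
    and "delta M q (tape_read t1, tape_read t2, tape_read t3) =
           (q', (tape_read t1, tape_read t2, tape_read t3), (m1, m2, m3))"
  shows "step M (q, t1, t2, t3) =
           (q', (fst t1, mv m1 (snd t1)), (fst t2, mv m2 (snd t2)), (fst t3, mv m3 (snd t3)))"
  using assms by (simp add: step_def tape_step_def tape_read_def)

definition tape_at :: "bool list \<Rightarrow> nat \<Rightarrow> tape" where
  "tape_at w k = (fst (init_tape w), int k)"

lemma tape_read_tape_at:
  "tape_read (tape_at w k) = (if k < length w then bit_sym (w ! k) else Blank)"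
  by (simp add: tape_read_def tape_at_def init_tape_def)

lemma poly_bounded_Suc: "poly_bounded Suc"
  unfolding poly_bounded_def by (intro exI[of _ 1]) auto

lemma accept_prob_nonneg: "accept_prob M rho q x \<ge> 0"
  by (simp add: accept_prob_def)

lemma accept_prob_eq_0_iff:
  "accept_prob M rho q x = 0 \<longleftrightarrow>
     (\<forall>b \<in> set_pmf q. \<forall>r. length r = rho (length x) \<longrightarrow> \<not> accepts M x b r)"
proof -
  let ?R = "{r :: bool list. length r = rho (length x)}"
  have "finite ?R"
    using finite_lists_length_eq[of "UNIV :: bool set"] by simp
  moreover have "?R \<noteq> {}"
    by (metis (mono_tags) empty_iff length_replicate mem_Collect_eq)
  ultimately have "set_pmf (pmf_of_set ?R) = ?R"
    by simp
  then show ?thesis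
    unfolding accept_prob_def measure_pmf_zero_iff by auto
qed

lemma NP_rpoly_subset_promise_problems: "NP_rpoly \<subseteq> ALL_problems"
  unfolding NP_rpoly_def ALL_problems_def promise_problem_def by fastforce

definition prefix_checker_delta ::
  "nat \<Rightarrow> sym \<times> sym \<times> sym \<Rightarrow> nat \<times> (sym \<times> sym \<times> sym) \<times> (move \<times> move \<times> move)" where
  "prefix_checker_delta q s = (case s of (a, c, r) \<Rightarrow>
     if a = Blank then (if c = One then 1 else 2, (a, c, r), (Stay, Stay, Stay))
     else if a = c then (0, (a, c, r), (MoveR, MoveR, Stay))
     else (2, (a, c, r), (Stay, Stay, Stay)))"

text \<open>In state 0 the machine compares input (tape 1) and advice (tape 2) cell by cell, moving
right while they agree; at the end of the input it accepts iff the next advice bit is 1.\<close>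
definition prefix_checker :: tm where
  "prefix_checker = \<lparr>nstates = 3, start = 0, acc = 1, rej = 2, delta = prefix_checker_delta\<rparr>"

lemma prefix_checker_simps [simp]:
  "start prefix_checker = 0" "acc prefix_checker = 1" "rej prefix_checker = 2"
  "delta prefix_checker = prefix_checker_delta"
  by (simp_all add: prefix_checker_def)

lemma wf_prefix_checker: "wf_tm prefix_checker"
  by (auto simp: wf_tm_def prefix_checker_def prefix_checker_delta_def split: prod.splits)

definition checking_config :: "bool list \<Rightarrow> bool list \<Rightarrow> bool list \<Rightarrow> nat \<Rightarrow> config" where
  "checking_config x b r k = (0, tape_at x k, tape_at b k, init_tape r)"

lemma step_checking_config:
  assumes "k < length x"
  shows "step prefix_checker (checking_config x b r k) =
    (if k < length b \<and> b ! k = x ! k then checking_config x b r (Suc k)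
     else (2, tape_at x k, tape_at b k, init_tape r))"
proof -
  have read_x: "tape_read (tape_at x k) = bit_sym (x ! k)"
    using assms by (simp add: tape_read_tape_at)
  have read_b: "tape_read (tape_at b k) = bit_sym (x ! k) \<longleftrightarrow> k < length b \<and> b ! k = x ! k"
    by (metis bit_sym_eq_iff bit_sym_neq_Blank tape_read_tape_at)
  have delta_x: "prefix_checker_delta 0 (bit_sym (x ! k), c, s) =
      (if c = bit_sym (x ! k) then (0, (bit_sym (x ! k), c, s), (MoveR, MoveR, Stay))
       else (2, (bit_sym (x ! k), c, s), (Stay, Stay, Stay)))" for c s
    by (simp add: prefix_checker_delta_def bit_sym_neq_Blank)
  show ?thesis
  proof (cases "k < length b \<and> b ! k = x ! k")
    case True
    then have "step prefix_checker (checking_config x b r k) =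
      (0, (fst (tape_at x k), mv MoveR (snd (tape_at x k))),
          (fst (tape_at b k), mv MoveR (snd (tape_at b k))),
          (fst (init_tape r), mv Stay (snd (init_tape r))))"
      unfolding checking_config_def
      by (intro step_writing_back) (simp_all add: read_x read_b delta_x)
    then show ?thesis
      unfolding if_P[OF True] by (simp add: checking_config_def tape_at_def)
  next
    case False
    then have "step prefix_checker (checking_config x b r k) =
      (2, (fst (tape_at x k), mv Stay (snd (tape_at x k))),
          (fst (tape_at b k), mv Stay (snd (tape_at b k))),
          (fst (init_tape r), mv Stay (snd (init_tape r))))"
      unfolding checking_config_def
      by (intro step_writing_back) (simp_all add: read_x read_b delta_x)
    then show ?thesis
      unfolding if_not_P[OF False] by (simp add: tape_at_def)
  qed
qed

lemma fst_step_checking_config_end: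
  "fst (step prefix_checker (checking_config x b r (length x))) =
    (if length x < length b \<and> b ! length x then 1 else 2)"
  by (auto simp: step_def checking_config_def prefix_checker_def prefix_checker_delta_def
      tape_read_tape_at bit_sym_def split: prod.splits)

lemma run_prefix_checker_comparing:
  assumes "k \<le> length x"
  shows "(take k b = take k x \<longrightarrow>
            run prefix_checker k (init_config prefix_checker x b r) = checking_config x b r k)
       \<and> (take k b \<noteq> take k x \<longrightarrow> fst (run prefix_checker k (init_config prefix_checker x b r)) = 2)"
  using assms
proof (induction k)
  case 0
  then show ?case
    by (simp add: run_def init_config_def prefix_checker_def checking_config_def tape_at_def init_tape_def)
next
  case (Suc k)
  then have "k < length x"
    by simp
  with Suc show ?case
    by (cases "take k b = take k x")
      (simp_all add: run_Suc step_checking_config take_Suc_eq_take_Suc_iff step_halted)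
qed

lemma fst_run_prefix_checker:
  "fst (run prefix_checker (Suc (length x)) (init_config prefix_checker x b r)) =
     (if \<exists>c. b = x @ True # c then 1 else 2)"
proof (cases "take (length x) b = x")
  case True
  then show ?thesis
    using run_prefix_checker_comparing[of "length x" x b r]
    by (simp add: run_Suc fst_step_checking_config_end append_Cons_prefix_iff)
next
  case False
  then have "fst (run prefix_checker (length x) (init_config prefix_checker x b r)) = 2"
    using run_prefix_checker_comparing[of "length x" x b r] by simp
  with False show ?thesis
    by (auto simp: run_Suc step_halted append_Cons_prefix_iff)
qed

lemma run_prefix_checker_after_halting:
  assumes "Suc (length x) \<le> t"
  shows "run prefix_checker t (init_config prefix_checker x b r) =
           run prefix_checker (Suc (length x)) (init_config prefix_checker x b r)"
    (is "run _ t ?c = run _ ?n ?c")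
proof -
  have "run prefix_checker t ?c = run prefix_checker (t - ?n) (run prefix_checker ?n ?c)"
    using assms by (metis le_add_diff_inverse2 run_add)
  also have "\<dots> = run prefix_checker ?n ?c"
    using fst_run_prefix_checker[of x b r] by (intro run_halted) simp
  finally show ?thesis .
qed

lemma accepts_prefix_checker_iff:
  "accepts prefix_checker x b r \<longleftrightarrow> (\<exists>c. b = x @ True # c)"
proof
  assume "accepts prefix_checker x b r"
  then obtain t where accepted: "fst (run prefix_checker t (init_config prefix_checker x b r)) = 1"
    unfolding accepts_def by auto
  have late: "Suc (length x) \<le> t"
  proof (rule ccontr)
    assume "\<not> Suc (length x) \<le> t"
    then have "t \<le> length x"
      by simp
    then have "fst (run prefix_checker t (init_config prefix_checker x b r)) \<in> {0, 2}"
      using run_prefix_checker_comparing[of t x b r] unfolding checking_config_def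
      by (metis fst_conv insertCI)
    with accepted show False
      by simp
  qed
  have "fst (run prefix_checker (Suc (length x)) (init_config prefix_checker x b r)) = 1"
    using accepted run_prefix_checker_after_halting[OF late] by simp
  then show "\<exists>c. b = x @ True # c"
    unfolding fst_run_prefix_checker by (simp split: if_splits)
next
  assume "\<exists>c. b = x @ True # c"
  then show "accepts prefix_checker x b r"
    using fst_run_prefix_checker[of x b r] unfolding accepts_def
    by (intro exI[of _ "Suc (length x)"]) simp
qed

lemma ppt_prefix_checker: "ppt prefix_checker (\<lambda>_. 0)"
proof -
  have "halts_within prefix_checker (Suc (length x + length b + length r)) x b r" for x b r
    unfolding halts_within_def using fst_run_prefix_checker[of x b r]
    by (intro exI[of _ "Suc (length x)"]) auto
  moreover have "poly_bounded (\<lambda>_. 0)"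
    unfolding poly_bounded_def by simp
  ultimately show ?thesis
    unfolding ppt_def using wf_prefix_checker poly_bounded_Suc by fastforce
qed

definition yes_advice :: "bool list set \<Rightarrow> nat \<Rightarrow> bool list pmf" where
  "yes_advice Y n =
     (if \<exists>y \<in> Y. length y = n then pmf_of_set {y @ [True] |y. y \<in> Y \<and> length y = n}
      else return_pmf (replicate (Suc n) False))"

lemma set_pmf_yes_advice:
  "set_pmf (yes_advice Y n) =
     (if \<exists>y \<in> Y. length y = n then {y @ [True] |y. y \<in> Y \<and> length y = n}
      else {replicate (Suc n) False})"
proof -
  have "finite {y :: bool list. length y = n}"
    using finite_lists_length_eq[of "UNIV :: bool set"] by simp
  then have "finite {y @ [True] |y. y \<in> Y \<and> length y = n}"
    by (auto intro: finite_subset[where B = "(\<lambda>y. y @ [True]) ` {y. length y = n}"])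
  moreover have "{y @ [True] |y. y \<in> Y \<and> length y = n} \<noteq> {}" if "\<exists>y \<in> Y. length y = n"
    using that by blast
  ultimately show ?thesis
    by (simp add: yes_advice_def)
qed

lemma length_in_set_pmf_yes_advice: "b \<in> set_pmf (yes_advice Y n) \<Longrightarrow> length b = Suc n"
  by (auto simp: set_pmf_yes_advice split: if_splits)

lemma yes_advice_certifies_iff:
  "(\<exists>b \<in> set_pmf (yes_advice Y (length x)). \<exists>c. b = x @ True # c) \<longleftrightarrow> x \<in> Y"
  by (auto simp: set_pmf_yes_advice split: if_splits
      dest: arg_cong[where f = "\<lambda>l. True \<in> set l"])

lemma accept_prob_prefix_checker_yes_advice_eq_0_iff:
  "accept_prob prefix_checker (\<lambda>_. 0) (yes_advice Y (length x)) x = 0 \<longleftrightarrow> x \<notin> Y"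
  unfolding accept_prob_eq_0_iff accepts_prefix_checker_iff yes_advice_certifies_iff[symmetric]
  by blast

theorem mainTheorem6:
  shows "NP_rpoly = ALL_problems"
proof
  show "NP_rpoly \<subseteq> ALL_problems"
    by (rule NP_rpoly_subset_promise_problems)
next
  show "ALL_problems \<subseteq> NP_rpoly"
  proof
    fix A assume "A \<in> ALL_problems"
    then have disjoint: "fst A \<inter> snd A = {}"
      by (simp add: ALL_problems_def promise_problem_def)
    let ?q = "yes_advice (fst A)"
    have "accept_prob prefix_checker (\<lambda>_. 0) (?q (length x)) x > 0" if "x \<in> fst A" for x
      using that accept_prob_nonneg[of prefix_checker "\<lambda>_. 0" "?q (length x)" x]
      by (simp add: order_le_less accept_prob_prefix_checker_yes_advice_eq_0_iff)
    moreover have "accept_prob prefix_checker (\<lambda>_. 0) (?q (length x)) x = 0" if "x \<in> snd A" for x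
      using that disjoint by (auto simp: accept_prob_prefix_checker_yes_advice_eq_0_iff)
    ultimately show "A \<in> NP_rpoly"
      unfolding NP_rpoly_def using ppt_prefix_checker poly_bounded_Suc length_in_set_pmf_yes_advice
      by blast
  qed
qed

end
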